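(* Let $N>0$, let $\langle k\rangle>1$ (the average node degree), and let $\beta>0$, $\gamma\ge 0$, $p\ge 0$ be parameters. Consider the mean-field ODE system in which the numbers of susceptible nodes $S$, infected nodes $I$, active susceptible–susceptible edges $[SS]$ and active susceptible–infected edges $[SI]$ satisfy $$\dot S=-\beta[SI],\qquad \dot I=\beta[SI]-\gamma I,$$ $$\dot{[SI]}=\beta\left(\frac{\langle k\rangle-1}{\langle k\rangle}\,\frac{[SS][SI]-[SI]^2}{S}-[SI]\right)-(\gamma+p)[SI],$$ with initial data depending on $I_0\in(0,N/4)$ given by $S(0)=N-I_0$, $I(0)=I_0$, $[SI](0)=\langle k\rangle I_0$, $[SS](0)=\frac{\langle k\rangle N}{2}-\langle k\rangle I_0$. Then $$\lim_{I_0\to 0}\frac{1}{I_0}\dot{[SI]}(0)=\beta\left(\frac{\langle k\rangle^2}{2}-\frac32\langle k\rangle\right)-(\gamma+p)\langle k\rangle,$$ and, setting $$p_1^*=\beta\left(\frac{\langle k\rangle}{2}-\frac32\right)-\gamma,$$ if $p>p_1^*$ then $\lim_{I_0\to 0}\frac{1}{I_0}\ddot S(0)>0$ (where $\ddot S(0)$ is computed from the system above, i.e. $\ddot S(0)=-\beta\,\dot{[SI]}(0)$).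
   Context: This is an SIR epidemic on an adaptive network with temporary link deactivation: susceptible–infected edges are deactivated at rate $p$, infection occurs at rate $\beta$ along active $[SI]$ edges, and infected nodes recover at rate $\gamma$. The equation for $[SI]$ arises from the edge equation $\dot{[SI]}=\beta[SSI]-\beta([SI]+[ISI])-\gamma[SI]-p[SI]$ closed by the moment closure $[ABC]\approx\frac{\langle k\rangle-1}{\langle k\rangle}\frac{[AB][BC]}{B}$ for triple links. The total number of edges is $\bar N=\langle k\rangle N/2=[SS](0)+[SI](0)$. *)

theory Defs
  imports Complex_Main
begin

definition SI_rhs :: "real \<Rightarrow> real \<Rightarrow> real \<Rightarrow> real \<Rightarrow> real \<Rightarrow> real \<Rightarrow> real \<Rightarrow> real" where
  "SI_rhs \<beta> \<gamma> p k S SS SI =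
     \<beta> * ((k - 1) / k * (SS * SI - SI ^ 2) / S - SI) - (\<gamma> + p) * SI"

definition S_init :: "real \<Rightarrow> real \<Rightarrow> real" where
  "S_init N I0 = N - I0"
definition I_init :: "real \<Rightarrow> real" where
  "I_init I0 = I0"
definition SI_init :: "real \<Rightarrow> real \<Rightarrow> real" where
  "SI_init k I0 = k * I0"
definition SS_init :: "real \<Rightarrow> real \<Rightarrow> real \<Rightarrow> real" where
  "SS_init k N I0 = k * N / 2 - k * I0"

definition SI_dot0 :: "real \<Rightarrow> real \<Rightarrow> real \<Rightarrow> real \<Rightarrow> real \<Rightarrow> real \<Rightarrow> real" where
  "SI_dot0 \<beta> \<gamma> p k N I0 =
     SI_rhs \<beta> \<gamma> p k (S_init N I0) (SS_init k N I0) (SI_init k I0)"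

definition S_ddot0 :: "real \<Rightarrow> real \<Rightarrow> real \<Rightarrow> real \<Rightarrow> real \<Rightarrow> real \<Rightarrow> real" where
  "S_ddot0 \<beta> \<gamma> p k N I0 = - \<beta> * SI_dot0 \<beta> \<gamma> p k N I0"

definition p1_star :: "real \<Rightarrow> real \<Rightarrow> real \<Rightarrow> real" where
  "p1_star \<beta> \<gamma> k = \<beta> * (k / 2 - 3 / 2) - \<gamma>"

end

theory Submission
  imports Defs
begin

text \<open>The initial data S(0), [SS](0), [SI](0) are affine in I0 and [SI](0) vanishes at I0 = 0,
  so [SI]'(0)/I0 is a rational function of I0 that is continuous at 0, and the limit is its value
  there. That value factors as k (p1* - p), and since S'' = -\<beta> [SI]' the limit of S''(0)/I0 is
  -\<beta> k (p1* - p), which is positive once p > p1*.\<close>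

lemma SI_dot0_div_eq:
  fixes N k I0 \<beta> \<gamma> p :: real
  assumes "I0 \<noteq> 0" and "I0 \<noteq> N" and "k \<noteq> 0"
  shows "SI_dot0 \<beta> \<gamma> p k N I0 / I0
           = \<beta> * ((k - 1) * (k * N / 2 - 2 * k * I0) / (N - I0) - k) - (\<gamma> + p) * k"
  using assms
  unfolding SI_dot0_def SI_rhs_def S_init_def SS_init_def SI_init_def
  by (simp add: field_simps power2_eq_square)

lemma tendsto_SI_dot0_div:
  fixes N k \<beta> \<gamma> p :: real
  assumes "N \<noteq> 0" and "k \<noteq> 0"
  shows "((\<lambda>I0. SI_dot0 \<beta> \<gamma> p k N I0 / I0)
            \<longlongrightarrow> \<beta> * (k ^ 2 / 2 - 3 / 2 * k) - (\<gamma> + p) * k) (at 0 within A)"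
proof -
  define g where "g I0 = \<beta> * ((k - 1) * (k * N / 2 - 2 * k * I0) / (N - I0) - k) - (\<gamma> + p) * k"
    for I0 :: real
  have "(g \<longlongrightarrow> g 0) (at 0 within A)"
    unfolding g_def by (intro tendsto_intros) (use assms in auto)
  moreover have "g 0 = \<beta> * (k ^ 2 / 2 - 3 / 2 * k) - (\<gamma> + p) * k"
    using assms by (simp add: g_def field_simps power2_eq_square)
  moreover have "\<forall>\<^sub>F I0 in at 0 within A. g I0 = SI_dot0 \<beta> \<gamma> p k N I0 / I0"
    using eventually_neq_at_within[of 0] eventually_neq_at_within[of N]
    by eventually_elim (simp add: g_def SI_dot0_div_eq assms)
  ultimately show ?thesis
    using tendsto_cong by fastforce
qed

lemma SI_dot0_limit_eq_p1_star:
  "\<beta> * (k ^ 2 / 2 - 3 / 2 * k) - (\<gamma> + p) * k = k * (p1_star \<beta> \<gamma> k - p)"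
  unfolding p1_star_def by (simp add: field_simps power2_eq_square)

theorem mainTheorem1:
  fixes N k \<beta> \<gamma> p :: real
  assumes "N > 0" and "k > 1" and "\<beta> > 0" and "\<gamma> \<ge> 0" and "p \<ge> 0"
  shows "((\<lambda>I0. SI_dot0 \<beta> \<gamma> p k N I0 / I0)
            \<longlongrightarrow> \<beta> * (k ^ 2 / 2 - 3 / 2 * k) - (\<gamma> + p) * k)
           (at 0 within {0<..<N/4})
       \<and> (p > p1_star \<beta> \<gamma> k \<longrightarrow>
           (\<exists>L. ((\<lambda>I0. S_ddot0 \<beta> \<gamma> p k N I0 / I0) \<longlongrightarrow> L) (at 0 within {0<..<N/4})
                \<and> L > 0))"
proof (intro conjI impI)
  have SI_lim: "((\<lambda>I0. SI_dot0 \<beta> \<gamma> p k N I0 / I0) \<longlongrightarrow> k * (p1_star \<beta> \<gamma> k - p))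
                  (at 0 within {0<..<N/4})"
    using tendsto_SI_dot0_div[of N k] assms unfolding SI_dot0_limit_eq_p1_star by simp
  then show "((\<lambda>I0. SI_dot0 \<beta> \<gamma> p k N I0 / I0)
               \<longlongrightarrow> \<beta> * (k ^ 2 / 2 - 3 / 2 * k) - (\<gamma> + p) * k) (at 0 within {0<..<N/4})"
    unfolding SI_dot0_limit_eq_p1_star .
  assume "p > p1_star \<beta> \<gamma> k"
  then have "- \<beta> * (k * (p1_star \<beta> \<gamma> k - p)) > 0"
    using assms by (simp add: mult_pos_neg)
  moreover have "((\<lambda>I0. S_ddot0 \<beta> \<gamma> p k N I0 / I0) \<longlongrightarrow> - \<beta> * (k * (p1_star \<beta> \<gamma> k - p)))
                   (at 0 within {0<..<N/4})"
    unfolding S_ddot0_def using tendsto_mult_left[OF SI_lim, of "- \<beta>"] by simp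
  ultimately show "\<exists>L. ((\<lambda>I0. S_ddot0 \<beta> \<gamma> p k N I0 / I0) \<longlongrightarrow> L) (at 0 within {0<..<N/4})
                     \<and> L > 0"
    by blast
qed

end
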